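(* Let $D$ be a domain in $\mathbb{R}^2$, let $\mu > 0$, and let $u$ be $\mu$-panharmonic in $D$, i.e. a real-valued $C^2(D)$ solution of $\nabla^2 u - \mu^2 u = 0$. If $u \geq 0$ in $D$ and $u$ does not vanish identically in $D$, then $$\frac{1}{2}\,u(x) < \frac{1}{\pi r^2}\int_{B_r(x)} u(y)\,\log\frac{r}{|x-y|}\,\mathrm{d}y$$ for every $x \in D$ and every $r > 0$ with $\overline{B_r(x)} \subset D$.
   Context: $B_r(x) = \{y : |y-x| < r\}$ is the open disc. *)

theory Defs
  imports "HOL-Analysis.Analysis"
begin

text \<open>The plane R^2 is modelled by the type complex. Partial derivative of a
real-valued function along direction v (v = 1 for the x-direction, v = i for y).\<close>

definition has_pderiv :: "complex \<Rightarrow> (complex \<Rightarrow> real) \<Rightarrow> real \<Rightarrow> complex \<Rightarrow> bool" where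
  "has_pderiv v f d x \<longleftrightarrow> ((\<lambda>t::real. f (x + of_real t * v)) has_real_derivative d) (at 0)"

definition pderiv :: "complex \<Rightarrow> (complex \<Rightarrow> real) \<Rightarrow> complex \<Rightarrow> real" where
  "pderiv v f x = (THE d. has_pderiv v f d x)"

definition C2_on :: "complex set \<Rightarrow> (complex \<Rightarrow> real) \<Rightarrow> bool" where
  "C2_on D u \<longleftrightarrow> continuous_on D u \<and>
     (\<forall>v\<in>{1, \<i>}. (\<forall>x\<in>D. \<exists>d. has_pderiv v u d x) \<and> continuous_on D (pderiv v u) \<and>
        (\<forall>w\<in>{1, \<i>}. (\<forall>x\<in>D. \<exists>d. has_pderiv w (pderiv v u) d x) \<and>
                      continuous_on D (pderiv w (pderiv v u))))"

definition laplacian :: "(complex \<Rightarrow> real) \<Rightarrow> complex \<Rightarrow> real" where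
  "laplacian u x = pderiv 1 (pderiv 1 u) x + pderiv \<i> (pderiv \<i> u) x"

definition panharmonic :: "real \<Rightarrow> complex set \<Rightarrow> (complex \<Rightarrow> real) \<Rightarrow> bool" where
  "panharmonic \<mu> D u \<longleftrightarrow> C2_on D u \<and> (\<forall>x\<in>D. laplacian u x - \<mu>\<^sup>2 * u x = 0)"

end

theory Submission
  imports Defs
begin

(* Let M(\<rho>) be the integral of u over the circle of radius \<rho> about x. Writing the
   Laplacian in polar coordinates and integrating over the angle turns \<Delta>u = \<mu>\<^sup>2 u into the
   modified Bessel equation \<rho>\<^sup>2 M'' + \<rho> M' = \<mu>\<^sup>2 \<rho>\<^sup>2 M, i.e. (\<rho> M')' = \<mu>\<^sup>2 \<rho> M. Since u \<ge> 0, \<rho> M'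
   is nondecreasing from 0, so M is nondecreasing; if u(x) > 0 it is strictly increasing, and if
   u(x) = 0 it vanishes near 0, which makes the zero set of u open and, by connectedness, empty.
   In polar coordinates the integral in the claim is \<integral>\<^sub>0\<^sup>r \<rho> ln(r/\<rho>) M(\<rho>) d\<rho>, which therefore
   exceeds M(0) \<integral>\<^sub>0\<^sup>r \<rho> ln(r/\<rho>) d\<rho> = 2\<pi> u(x) r\<^sup>2/4. *)

lemma has_pderiv_imp_pderiv: "has_pderiv v f d x \<Longrightarrow> pderiv v f x = d"
  unfolding pderiv_def has_pderiv_def by (blast intro: DERIV_unique)

lemma has_pderiv_imp_DERIV_line:
  assumes "has_pderiv v f d (p + of_real t * v)"
  shows "((\<lambda>s. f (p + of_real s * v)) has_real_derivative d) (at t)"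
proof -
  have "((\<lambda>s. f (p + of_real (s + t) * v)) has_real_derivative d) (at 0)"
    using assms unfolding has_pderiv_def by (simp add: algebra_simps)
  then show ?thesis using DERIV_shift[of "\<lambda>s. f (p + of_real s * v)" d 0 t] by simp
qed

lemma has_pderiv_imp_DERIV_Re:
  assumes "has_pderiv 1 f d (Complex x y)"
  shows "((\<lambda>s. f (Complex s y)) has_real_derivative d) (at x)"
proof -
  have "Complex 0 y + of_real s * 1 = Complex s y" for s by (simp add: complex_eq_iff)
  with has_pderiv_imp_DERIV_line[of 1 f d "Complex 0 y" x] assms show ?thesis by simp
qed

lemma has_pderiv_imp_DERIV_Im:
  assumes "has_pderiv \<i> f d (Complex x y)"
  shows "((\<lambda>s. f (Complex x s)) has_real_derivative d) (at y)"
proof -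
  have "Complex x 0 + of_real s * \<i> = Complex x s" for s by (simp add: complex_eq_iff)
  with has_pderiv_imp_DERIV_line[of \<i> f d "Complex x 0" y] assms show ?thesis by simp
qed

lemma has_derivative_continuous_partials:
  fixes f fx fy :: "complex \<Rightarrow> real"
  assumes "open D" and "z \<in> D"
    and fx: "\<And>p. p \<in> D \<Longrightarrow> has_pderiv 1 f (fx p) p"
    and fy: "\<And>p. p \<in> D \<Longrightarrow> has_pderiv \<i> f (fy p) p"
    and fy_cont: "continuous_on D fy"
  shows "(f has_derivative (\<lambda>h. Re h * fx z + Im h * fy z)) (at z)"
proof -
  obtain e where "e > 0" and e: "ball z e \<subseteq> D"
    using assms(1,2) open_contains_ball by blast
  define X where "X = ball (Re z) (e/2)"
  define Y where "Y = ball (Im z) (e/2)"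
  have XY: "Complex x y \<in> D" if "x \<in> X" "y \<in> Y" for x y
  proof -
    have "norm (Complex x y - z) \<le> \<bar>x - Re z\<bar> + \<bar>y - Im z\<bar>"
      using cmod_le[of "Complex x y - z"] by simp
    also have "\<dots> < e" using that by (simp add: X_def Y_def dist_real_def abs_minus_commute)
    finally show ?thesis using e by (auto simp: dist_norm norm_minus_commute)
  qed
  have "((\<lambda>x. f (Complex x (Im z))) has_derivative (\<lambda>t. t * fx z)) (at (Re z) within X)"
    using has_pderiv_imp_DERIV_Re[of f "fx z" "Re z" "Im z"] fx[OF assms(2)]
    by (auto intro: has_derivative_at_withinI simp: has_field_derivative_def mult_commute_abs)
  moreover have "((\<lambda>y. f (Complex x y)) has_derivative blinfun_scaleR_left (fy (Complex x y))) (at y within Y)"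
    if "x \<in> X" "y \<in> Y" for x y
    using has_pderiv_imp_DERIV_Im[OF fy[OF XY[OF that]]]
    by (auto intro: has_derivative_at_withinI simp: has_field_derivative_def mult_commute_abs)
  moreover have "continuous (at (Re z, Im z) within X \<times> Y) (\<lambda>(x, y). blinfun_scaleR_left (fy (Complex x y)))"
  proof -
    have "continuous_on (X \<times> Y) (\<lambda>(x, y). blinfun_scaleR_left (fy (Complex x y)))"
      unfolding case_prod_beta
      by (intro continuous_intros continuous_on_compose2[OF fy_cont]) (auto simp: XY)
    moreover have "(Re z, Im z) \<in> X \<times> Y" using \<open>e > 0\<close> by (simp add: X_def Y_def)
    ultimately show ?thesis using continuous_on_eq_continuous_within by blast
  qed
  ultimately have "((\<lambda>(x, y). f (Complex x y)) has_derivative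
      (\<lambda>(tx, ty). tx * fx z + blinfun_scaleR_left (fy (Complex (Re z) (Im z))) ty))
      (at (Re z, Im z) within X \<times> Y)"
    by (rule has_derivative_partialsI[where fy="\<lambda>x y. blinfun_scaleR_left (fy (Complex x y))"])
      (use \<open>e > 0\<close> in \<open>simp_all add: Y_def\<close>)
  moreover have "(Re z, Im z) \<in> X \<times> Y" "open (X \<times> Y)"
    using \<open>e > 0\<close> by (auto simp: X_def Y_def open_Times)
  ultimately have "((\<lambda>(x, y). f (Complex x y)) has_derivative (\<lambda>(tx, ty). tx * fx z + ty * fy z))
      (at (Re z, Im z))"
    by (simp add: at_within_open[of "(Re z, Im z)" "X \<times> Y"] scaleR_conv_of_real)
  moreover have "((\<lambda>h. (Re h, Im h)) has_derivative (\<lambda>h. (Re h, Im h))) (at z)"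
    by (auto intro!: derivative_eq_intros)
  ultimately show ?thesis
    using diff_chain_at by (fastforce simp: o_def)
qed

(* For C\<^sup>2 functions, dir_deriv u h p = Du(p) h and dir_deriv2 u h k p = D(q \<mapsto> Du(q) h)(p) k. *)
definition dir_deriv :: "(complex \<Rightarrow> real) \<Rightarrow> complex \<Rightarrow> complex \<Rightarrow> real" where
  "dir_deriv u h p = Re h * pderiv 1 u p + Im h * pderiv \<i> u p"

definition dir_deriv2 :: "(complex \<Rightarrow> real) \<Rightarrow> complex \<Rightarrow> complex \<Rightarrow> complex \<Rightarrow> real" where
  "dir_deriv2 u h k p = Re h * dir_deriv (pderiv 1 u) k p + Im h * dir_deriv (pderiv \<i> u) k p"

lemma C2_on_pderiv:
  assumes "C2_on D u" "v \<in> {1, \<i>}"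
  shows "\<And>p. p \<in> D \<Longrightarrow> has_pderiv v u (pderiv v u p) p" "continuous_on D (pderiv v u)"
  using assms unfolding C2_on_def by (metis has_pderiv_imp_pderiv)+

lemma C2_on_pderiv2:
  assumes "C2_on D u" "v \<in> {1, \<i>}" "w \<in> {1, \<i>}"
  shows "\<And>p. p \<in> D \<Longrightarrow> has_pderiv w (pderiv v u) (pderiv w (pderiv v u) p) p"
    and "continuous_on D (pderiv w (pderiv v u))"
  using assms unfolding C2_on_def by (metis has_pderiv_imp_pderiv)+

lemma C2_on_has_derivative:
  assumes "open D" "C2_on D u" "p \<in> D"
  shows "(u has_derivative (\<lambda>h. dir_deriv u h p)) (at p)"
  unfolding dir_deriv_def
  using assms C2_on_pderiv[OF assms(2)] by (intro has_derivative_continuous_partials) auto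

lemma C2_on_has_derivative_pderiv:
  assumes "open D" "C2_on D u" "p \<in> D" "v \<in> {1, \<i>}"
  shows "(pderiv v u has_derivative (\<lambda>k. dir_deriv (pderiv v u) k p)) (at p)"
  unfolding dir_deriv_def
  using assms C2_on_pderiv2[OF assms(2,4)] by (intro has_derivative_continuous_partials) auto

lemma C2_on_has_derivative_dir_deriv:
  assumes "open D" "C2_on D u" "p \<in> D"
  shows "((\<lambda>q. dir_deriv u h q) has_derivative (\<lambda>k. dir_deriv2 u h k p)) (at p)"
  using C2_on_has_derivative_pderiv[OF assms, of 1] C2_on_has_derivative_pderiv[OF assms, of \<i>]
  unfolding dir_deriv_def[of u] dir_deriv2_def
  by (auto intro!: derivative_eq_intros)

lemma dir_deriv_scale: "dir_deriv u (of_real a * h) p = a * dir_deriv u h p"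
  by (simp add: dir_deriv_def algebra_simps)

lemma dir_deriv2_scale: "dir_deriv2 u (of_real a * h) (of_real b * k) p = a * b * dir_deriv2 u h k p"
  unfolding dir_deriv2_def dir_deriv_scale by (simp add: algebra_simps)

(* The mixed terms of h and \<i> h cancel. *)
lemma laplacian_dir_deriv2:
  "dir_deriv2 u h h p + dir_deriv2 u (\<i> * h) (\<i> * h) p = (norm h)\<^sup>2 * laplacian u p"
  unfolding dir_deriv2_def dir_deriv_def laplacian_def cmod_power2
  by (simp add: algebra_simps power2_eq_square)

(* The Laplacian in polar coordinates: for v(\<rho>, \<theta>) = u(z + \<rho> e\<^sup>i\<^sup>\<theta>), the left-hand side is
   \<rho> \<partial>\<^sub>\<rho> v + \<rho>\<^sup>2 \<partial>\<^sub>\<rho>\<^sup>2 v + \<partial>\<^sub>\<theta>\<^sup>2 v at p = z + \<rho> e\<^sup>i\<^sup>\<theta>. *)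
lemma polar_laplacian:
  "\<rho> * dir_deriv u (cis \<theta>) p + \<rho>\<^sup>2 * dir_deriv2 u (cis \<theta>) (cis \<theta>) p
     + (dir_deriv u (- rcis \<rho> \<theta>) p + dir_deriv2 u (\<i> * rcis \<rho> \<theta>) (\<i> * rcis \<rho> \<theta>) p)
   = \<rho>\<^sup>2 * laplacian u p"
proof -
  have polar: "- rcis \<rho> \<theta> = of_real (- \<rho>) * cis \<theta>" "\<i> * rcis \<rho> \<theta> = of_real \<rho> * (\<i> * cis \<theta>)"
    by (simp_all add: rcis_def)
  show ?thesis
    using laplacian_dir_deriv2[of u "cis \<theta>" p]
    unfolding polar dir_deriv_scale dir_deriv2_scale by (simp add: power2_eq_square flip: distrib_left)
qed

section \<open>Circle integrals\<close>

lemma DERIV_compose_path: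
  fixes f :: "complex \<Rightarrow> real"
  assumes "(f has_derivative f') (at (\<gamma> t))" and "(\<gamma> has_vector_derivative \<gamma>') (at t)"
  shows "((\<lambda>s. f (\<gamma> s)) has_real_derivative f' \<gamma>') (at t)"
proof -
  have "(f \<circ> \<gamma> has_derivative f' \<circ> (\<lambda>s. s *\<^sub>R \<gamma>')) (at t)"
    using assms by (intro diff_chain_at) (simp_all add: has_vector_derivative_def)
  moreover have "f' \<circ> (\<lambda>s. s *\<^sub>R \<gamma>') = (\<lambda>s. s * f' \<gamma>')"
    using linear.scaleR[OF has_derivative_linear[OF assms(1)]] by (auto simp: o_def)
  ultimately show ?thesis
    by (simp add: has_field_derivative_def o_def mult_commute_abs)
qed

lemma has_vector_derivative_rcis_radius:
  "((\<lambda>\<rho>. z + rcis \<rho> \<theta>) has_vector_derivative cis \<theta>) (at \<rho>)"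
  unfolding has_vector_derivative_complex_iff by (auto intro!: derivative_eq_intros)

lemma has_vector_derivative_rcis_angle:
  "((\<lambda>\<theta>. z + rcis \<rho> \<theta>) has_vector_derivative \<i> * rcis \<rho> \<theta>) (at \<theta>)"
  unfolding has_vector_derivative_complex_iff by (auto intro!: derivative_eq_intros)

lemma continuous_on_compose_polar:
  assumes "continuous_on D g" and "\<And>\<rho> \<theta>. (\<rho>, \<theta>) \<in> S \<Longrightarrow> z + rcis \<rho> \<theta> \<in> D"
  shows "continuous_on S (\<lambda>x. g (z + rcis (fst x) (snd x)))"
proof (rule continuous_on_compose2[OF assms(1)])
  show "(\<lambda>x. z + rcis (fst x) (snd x)) ` S \<subseteq> D"
  proof
    fix y assume "y \<in> (\<lambda>x. z + rcis (fst x) (snd x)) ` S"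
    then obtain \<rho> \<theta> where "(\<rho>, \<theta>) \<in> S" "y = z + rcis \<rho> \<theta>" by auto
    then show "y \<in> D" using assms(2) by simp
  qed
  show "continuous_on S (\<lambda>x. z + rcis (fst x) (snd x))"
    by (intro continuous_on_add continuous_on_const continuous_on_rcis continuous_on_fst continuous_on_snd continuous_on_id)
qed

lemma continuous_on_circle:
  assumes "continuous_on D g" and "\<And>\<theta>. z + rcis \<rho> \<theta> \<in> D"
  shows "continuous_on T (\<lambda>\<theta>. g (z + rcis \<rho> \<theta>))"
  by (rule continuous_on_compose2[OF assms(1)])
    (auto intro!: continuous_on_add continuous_on_const continuous_on_rcis continuous_on_id assms(2))

lemma DERIV_parametric_integral:
  fixes F F' :: "real \<Rightarrow> real \<Rightarrow> real"
  assumes "open U" "convex U" "x \<in> U"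
    and "\<And>x t. x \<in> U \<Longrightarrow> ((\<lambda>x. F x t) has_real_derivative F' x t) (at x)"
    and "continuous_on (U \<times> {a..b}) (\<lambda>(x, t). F x t)"
    and "continuous_on (U \<times> {a..b}) (\<lambda>(x, t). F' x t)"
  shows "((\<lambda>x. integral {a..b} (F x)) has_real_derivative integral {a..b} (F' x)) (at x)"
proof -
  have int: "F y integrable_on cbox a b" if "y \<in> U" for y
  proof (rule integrable_continuous)
    have "continuous_on (cbox a b) (\<lambda>t. (y, t))"
      by (intro continuous_on_Pair continuous_on_const continuous_on_id)
    moreover have "(\<lambda>t. (y, t)) ` cbox a b \<subseteq> U \<times> {a..b}"
      using that by auto
    ultimately show "continuous_on (cbox a b) (F y)"
      using continuous_on_compose2[OF assms(5)] by fastforce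
  qed
  have "((\<lambda>x. integral (cbox a b) (F x)) has_real_derivative integral (cbox a b) (F' x)) (at x within U)"
  proof (rule leibniz_rule_field_derivative[OF _ int])
    show "((\<lambda>x. F x t) has_field_derivative F' x t) (at x within U)" if "x \<in> U" for x t
      using assms(4)[OF that] by (rule has_field_derivative_at_within)
    show "continuous_on (U \<times> cbox a b) (\<lambda>(x, t). F' x t)"
      using assms(6) by (simp add: cbox_interval)
  qed (use assms(2,3) in auto)
  then show ?thesis by (simp add: at_within_open[OF assms(3,1)] cbox_interval)
qed

lemma continuous_on_dir_derivs_polar:
  assumes "C2_on D u" and "\<And>\<rho> \<theta>. (\<rho>, \<theta>) \<in> S \<Longrightarrow> z + rcis \<rho> \<theta> \<in> D"
  shows "continuous_on S (\<lambda>(\<rho>, \<theta>). dir_deriv u (cis \<theta>) (z + rcis \<rho> \<theta>))"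
    and "continuous_on S (\<lambda>(\<rho>, \<theta>). dir_deriv2 u (cis \<theta>) (cis \<theta>) (z + rcis \<rho> \<theta>))"
  unfolding dir_deriv2_def dir_deriv_def case_prod_beta
  by (intro continuous_intros continuous_on_compose_polar[OF _ assms(2)] C2_on_pderiv C2_on_pderiv2 assms(1);
      simp)+

definition circle_integral :: "(complex \<Rightarrow> real) \<Rightarrow> complex \<Rightarrow> real \<Rightarrow> real" where
  "circle_integral u z \<rho> = integral {0..2*pi} (\<lambda>\<theta>. u (z + rcis \<rho> \<theta>))"

lemma circle_integral_0: "circle_integral u z 0 = 2 * pi * u z"
  by (simp add: circle_integral_def)

lemma continuous_on_circle_integral:
  assumes "continuous_on (cball z r) u"
  shows "continuous_on {0..r} (circle_integral u z)"
proof -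
  have "continuous_on ({0..r} \<times> cbox 0 (2*pi)) (\<lambda>x. u (z + rcis (fst x) (snd x)))"
    by (rule continuous_on_compose_polar[OF assms]) (auto simp: dist_norm)
  then show ?thesis
    unfolding circle_integral_def cbox_interval[symmetric]
    by (intro integral_continuous_on_param) (simp add: case_prod_beta)
qed

lemma circle_integral_eq_0_iff:
  assumes "continuous_on D u" and "\<And>\<theta>. z + rcis \<rho> \<theta> \<in> D" and "\<And>\<theta>. 0 \<le> u (z + rcis \<rho> \<theta>)"
  shows "circle_integral u z \<rho> = 0 \<longleftrightarrow> (\<forall>\<theta>\<in>{0..2*pi}. u (z + rcis \<rho> \<theta>) = 0)"
  unfolding circle_integral_def
  by (rule integral_eq_0_iff) (simp_all add: continuous_on_circle[OF assms(1,2)] assms(3))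

context
  fixes D :: "complex set" and u :: "complex \<Rightarrow> real" and z :: complex and R :: real
  assumes D: "open D" and u: "C2_on D u" and ball: "ball z R \<subseteq> D"
begin

private lemma polar_in_D: "\<rho> \<in> {-R<..<R} \<Longrightarrow> z + rcis \<rho> \<theta> \<in> D"
  using ball by (simp add: subset_iff dist_norm abs_less_iff)

lemma circle_integral_DERIV:
  assumes "\<rho> \<in> {-R<..<R}"
  shows "(circle_integral u z has_real_derivative
           integral {0..2*pi} (\<lambda>\<theta>. dir_deriv u (cis \<theta>) (z + rcis \<rho> \<theta>))) (at \<rho>)"
  unfolding circle_integral_def
proof (rule DERIV_parametric_integral[OF _ _ assms])
  show "((\<lambda>\<rho>. u (z + rcis \<rho> \<theta>)) has_real_derivative dir_deriv u (cis \<theta>) (z + rcis \<rho> \<theta>)) (at \<rho>)"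
    if "\<rho> \<in> {-R<..<R}" for \<rho> \<theta>
    using DERIV_compose_path[OF C2_on_has_derivative[OF D u polar_in_D] has_vector_derivative_rcis_radius] that
    by simp
  show "continuous_on ({-R<..<R} \<times> {0..2*pi}) (\<lambda>(\<rho>, \<theta>). u (z + rcis \<rho> \<theta>))"
    unfolding case_prod_beta
    by (rule continuous_on_compose_polar[of D]) (use u polar_in_D in \<open>auto simp: C2_on_def\<close>)
  show "continuous_on ({-R<..<R} \<times> {0..2*pi}) (\<lambda>(\<rho>, \<theta>). dir_deriv u (cis \<theta>) (z + rcis \<rho> \<theta>))"
    by (rule continuous_on_dir_derivs_polar[OF u]) (use polar_in_D in auto)
qed auto

lemma circle_integral_DERIV2:
  assumes "\<rho> \<in> {-R<..<R}"
  shows "((\<lambda>\<rho>. integral {0..2*pi} (\<lambda>\<theta>. dir_deriv u (cis \<theta>) (z + rcis \<rho> \<theta>))) has_real_derivative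
           integral {0..2*pi} (\<lambda>\<theta>. dir_deriv2 u (cis \<theta>) (cis \<theta>) (z + rcis \<rho> \<theta>))) (at \<rho>)"
proof (rule DERIV_parametric_integral[OF _ _ assms])
  show "((\<lambda>\<rho>. dir_deriv u (cis \<theta>) (z + rcis \<rho> \<theta>)) has_real_derivative
          dir_deriv2 u (cis \<theta>) (cis \<theta>) (z + rcis \<rho> \<theta>)) (at \<rho>)"
    if "\<rho> \<in> {-R<..<R}" for \<rho> \<theta>
    using DERIV_compose_path[OF C2_on_has_derivative_dir_deriv[OF D u polar_in_D] has_vector_derivative_rcis_radius] that
    by simp
  show "continuous_on ({-R<..<R} \<times> {0..2*pi}) (\<lambda>(\<rho>, \<theta>). dir_deriv u (cis \<theta>) (z + rcis \<rho> \<theta>))"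
    "continuous_on ({-R<..<R} \<times> {0..2*pi}) (\<lambda>(\<rho>, \<theta>). dir_deriv2 u (cis \<theta>) (cis \<theta>) (z + rcis \<rho> \<theta>))"
    by (rule continuous_on_dir_derivs_polar[OF u]; use polar_in_D in auto)+
qed auto

(* The integrand is the \<theta>-derivative of the 2\<pi>-periodic function \<theta> \<mapsto> dir_deriv u (\<i> rcis \<rho> \<theta>) (z + rcis \<rho> \<theta>). *)
lemma circle_integral_angular:
  assumes "\<rho> \<in> {-R<..<R}"
  shows "((\<lambda>\<theta>. dir_deriv u (- rcis \<rho> \<theta>) (z + rcis \<rho> \<theta>)
            + dir_deriv2 u (\<i> * rcis \<rho> \<theta>) (\<i> * rcis \<rho> \<theta>) (z + rcis \<rho> \<theta>)) has_integral 0) {0..2*pi}"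
proof -
  define T where "T \<theta> = dir_deriv u (\<i> * rcis \<rho> \<theta>) (z + rcis \<rho> \<theta>)" for \<theta>
  have "((\<lambda>\<theta>. pderiv v u (z + rcis \<rho> \<theta>)) has_real_derivative
          dir_deriv (pderiv v u) (\<i> * rcis \<rho> \<theta>) (z + rcis \<rho> \<theta>)) (at \<theta>)"
    if "v \<in> {1, \<i>}" for v \<theta>
    by (rule DERIV_compose_path[OF C2_on_has_derivative_pderiv[OF D u polar_in_D[OF assms] that]
          has_vector_derivative_rcis_angle])
  then have "(T has_real_derivative dir_deriv u (- rcis \<rho> \<theta>) (z + rcis \<rho> \<theta>)
              + dir_deriv2 u (\<i> * rcis \<rho> \<theta>) (\<i> * rcis \<rho> \<theta>) (z + rcis \<rho> \<theta>)) (at \<theta>)" for \<theta>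
    unfolding T_def dir_deriv_def[of u] dir_deriv2_def
    by (auto intro!: derivative_eq_intros simp: algebra_simps)
  then have "((\<lambda>\<theta>. dir_deriv u (- rcis \<rho> \<theta>) (z + rcis \<rho> \<theta>)
            + dir_deriv2 u (\<i> * rcis \<rho> \<theta>) (\<i> * rcis \<rho> \<theta>) (z + rcis \<rho> \<theta>)) has_integral T (2*pi) - T 0) {0..2*pi}"
    by (intro fundamental_theorem_of_calculus)
      (auto simp: has_real_derivative_iff_has_vector_derivative[symmetric] intro: DERIV_subset)
  moreover have "T (2*pi) = T 0" by (simp add: T_def rcis_def)
  ultimately show ?thesis by simp
qed

lemma circle_integral_bessel:
  assumes lap: "\<And>p. p \<in> D \<Longrightarrow> laplacian u p = c * u p" and \<rho>: "\<rho> \<in> {-R<..<R}"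
  shows "\<rho>\<^sup>2 * integral {0..2*pi} (\<lambda>\<theta>. dir_deriv2 u (cis \<theta>) (cis \<theta>) (z + rcis \<rho> \<theta>))
           + \<rho> * integral {0..2*pi} (\<lambda>\<theta>. dir_deriv u (cis \<theta>) (z + rcis \<rho> \<theta>))
         = c * \<rho>\<^sup>2 * circle_integral u z \<rho>"
proof -
  have cont: "continuous_on {0..2*pi} (\<lambda>\<theta>. u (z + rcis \<rho> \<theta>))"
    "continuous_on {0..2*pi} (\<lambda>\<theta>. dir_deriv u (cis \<theta>) (z + rcis \<rho> \<theta>))"
    "continuous_on {0..2*pi} (\<lambda>\<theta>. dir_deriv2 u (cis \<theta>) (cis \<theta>) (z + rcis \<rho> \<theta>))"
    unfolding dir_deriv2_def dir_deriv_def
    by (intro continuous_intros continuous_on_circle[OF _ polar_in_D[OF \<rho>]] C2_on_pderiv C2_on_pderiv2 u;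
        use u in \<open>simp add: C2_on_def\<close>)+
  have "((\<lambda>\<theta>. \<rho> * dir_deriv u (cis \<theta>) (z + rcis \<rho> \<theta>)
          + \<rho>\<^sup>2 * dir_deriv2 u (cis \<theta>) (cis \<theta>) (z + rcis \<rho> \<theta>)
          + (dir_deriv u (- rcis \<rho> \<theta>) (z + rcis \<rho> \<theta>)
             + dir_deriv2 u (\<i> * rcis \<rho> \<theta>) (\<i> * rcis \<rho> \<theta>) (z + rcis \<rho> \<theta>)))
        has_integral \<rho> * integral {0..2*pi} (\<lambda>\<theta>. dir_deriv u (cis \<theta>) (z + rcis \<rho> \<theta>))
          + \<rho>\<^sup>2 * integral {0..2*pi} (\<lambda>\<theta>. dir_deriv2 u (cis \<theta>) (cis \<theta>) (z + rcis \<rho> \<theta>)) + 0) {0..2*pi}"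
    using cont(2,3) circle_integral_angular[OF \<rho>]
    by (intro has_integral_add has_integral_mult_right integrable_integral integrable_continuous_real)
  moreover have "((\<lambda>\<theta>. \<rho>\<^sup>2 * c * u (z + rcis \<rho> \<theta>)) has_integral \<rho>\<^sup>2 * c * circle_integral u z \<rho>) {0..2*pi}"
    unfolding circle_integral_def using cont(1)
    by (intro has_integral_mult_right integrable_integral integrable_continuous_real)
  moreover have "\<rho> * dir_deriv u (cis \<theta>) (z + rcis \<rho> \<theta>)
          + \<rho>\<^sup>2 * dir_deriv2 u (cis \<theta>) (cis \<theta>) (z + rcis \<rho> \<theta>)
          + (dir_deriv u (- rcis \<rho> \<theta>) (z + rcis \<rho> \<theta>)
             + dir_deriv2 u (\<i> * rcis \<rho> \<theta>) (\<i> * rcis \<rho> \<theta>) (z + rcis \<rho> \<theta>))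
        = \<rho>\<^sup>2 * c * u (z + rcis \<rho> \<theta>)" for \<theta>
    unfolding polar_laplacian lap[OF polar_in_D[OF \<rho>]] by simp
  ultimately show ?thesis
    by (simp add: has_integral_unique algebra_simps)
qed

end

section \<open>The modified Bessel equation of order zero\<close>

lemma MVT_interval:
  fixes f f' :: "real \<Rightarrow> real"
  assumes "a < b" "{a..b} \<subseteq> S" "\<And>x. x \<in> S \<Longrightarrow> (f has_real_derivative f' x) (at x)"
  obtains \<xi> where "a < \<xi>" "\<xi> < b" "f b - f a = (b - a) * f' \<xi>"
proof -
  have "(f has_real_derivative f' x) (at x)" if "a \<le> x" "x \<le> b" for x
    using assms(2,3) that by auto
  from MVT2[OF assms(1) this] show ?thesis using that by blast
qed

(* M is meant to be the circle integral of a solution of \<Delta>u = c u; the radius ranges over (-R, R)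
   so that derivatives at 0 are two-sided. *)
locale modified_bessel_ode =
  fixes M N N' :: "real \<Rightarrow> real" and R c :: real
  assumes c_pos: "c > 0"
    and M_deriv: "\<And>\<rho>. \<rho> \<in> {-R<..<R} \<Longrightarrow> (M has_real_derivative N \<rho>) (at \<rho>)"
    and N_deriv: "\<And>\<rho>. \<rho> \<in> {-R<..<R} \<Longrightarrow> (N has_real_derivative N' \<rho>) (at \<rho>)"
    and equation: "\<And>\<rho>. \<rho> \<in> {-R<..<R} \<Longrightarrow> \<rho>\<^sup>2 * N' \<rho> + \<rho> * N \<rho> = c * \<rho>\<^sup>2 * M \<rho>"
    and M_nonneg: "\<And>\<rho>. 0 \<le> \<rho> \<Longrightarrow> \<rho> < R \<Longrightarrow> 0 \<le> M \<rho>"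
begin

lemma N_mean_value:
  assumes "0 < \<rho>" "\<rho> < R"
  obtains \<xi> where "0 < \<xi>" "\<xi> < \<rho>" "N \<rho> = c * \<xi> * M \<xi>"
proof -
  define P where "P s = s * N s" for s
  have dP: "(P has_real_derivative N s + s * N' s) (at s)" if "s \<in> {-R<..<R}" for s
    unfolding P_def[abs_def] using N_deriv[OF that] by (auto intro!: derivative_eq_intros)
  have "{0..\<rho>} \<subseteq> {-R<..<R}" using assms by auto
  then obtain \<xi> where \<xi>: "0 < \<xi>" "\<xi> < \<rho>" "P \<rho> - P 0 = (\<rho> - 0) * (N \<xi> + \<xi> * N' \<xi>)"
    using MVT_interval[OF assms(1) _ dP] by blast
  have "\<xi> * (N \<xi> + \<xi> * N' \<xi>) = \<xi> * (c * \<xi> * M \<xi>)"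
    using equation[of \<xi>] \<xi> assms by (simp add: power2_eq_square algebra_simps)
  then have "N \<rho> = c * \<xi> * M \<xi>"
    using \<xi> assms by (simp add: P_def)
  with \<xi>(1,2) show ?thesis by (rule that)
qed

lemma N_nonneg:
  assumes "0 < \<rho>" "\<rho> < R"
  shows "0 \<le> N \<rho>"
proof -
  obtain \<xi> where "0 < \<xi>" "\<xi> < \<rho>" "N \<rho> = c * \<xi> * M \<xi>"
    using N_mean_value[OF assms] .
  then show ?thesis using M_nonneg[of \<xi>] c_pos assms by simp
qed

lemma M_mono:
  assumes "0 \<le> a" "a \<le> b" "b < R"
  shows "M a \<le> M b"
proof (cases "a = b")
  case False
  then have "a < b" using assms by simp
  moreover have "{a..b} \<subseteq> {-R<..<R}" using assms by auto
  ultimately obtain \<xi> where "a < \<xi>" "\<xi> < b" "M b - M a = (b - a) * N \<xi>"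
    using MVT_interval[OF _ _ M_deriv] by blast
  moreover have "0 \<le> (b - a) * N \<xi>" using N_nonneg calculation assms by simp
  ultimately show ?thesis by linarith
qed simp

lemma M_strict_mono:
  assumes "0 < M 0" "0 \<le> a" "a < b" "b < R"
  shows "M a < M b"
proof -
  have "{a..b} \<subseteq> {-R<..<R}" using assms by auto
  then obtain \<xi> where \<xi>: "a < \<xi>" "\<xi> < b" "M b - M a = (b - a) * N \<xi>"
    using MVT_interval[OF \<open>a < b\<close> _ M_deriv] by blast
  obtain \<eta> where \<eta>: "0 < \<eta>" "\<eta> < \<xi>" "N \<xi> = c * \<eta> * M \<eta>"
    using N_mean_value[of \<xi>] \<xi> assms by auto
  have "0 < M \<eta>" using M_mono[of 0 \<eta>] \<eta> \<xi> assms by simp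
  then have "0 < (b - a) * N \<xi>" using \<eta> c_pos assms by simp
  with \<xi> show ?thesis by linarith
qed

lemma M_eq_0:
  assumes "M 0 = 0" "0 \<le> \<rho>" "\<rho> < R" "c * \<rho>\<^sup>2 < 1"
  shows "M \<rho> = 0"
proof (cases "\<rho> = 0")
  case False
  with assms have "0 < \<rho>" by simp
  moreover have "{0..\<rho>} \<subseteq> {-R<..<R}" using assms by auto
  ultimately obtain \<xi> where \<xi>: "0 < \<xi>" "\<xi> < \<rho>" "M \<rho> - M 0 = (\<rho> - 0) * N \<xi>"
    using MVT_interval[OF _ _ M_deriv] by blast
  obtain \<eta> where \<eta>: "0 < \<eta>" "\<eta> < \<xi>" "N \<xi> = c * \<eta> * M \<eta>"
    using N_mean_value[of \<xi>] \<xi> assms by auto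
  have "c * \<eta> * M \<eta> \<le> c * \<rho> * M \<rho>"
    using M_mono[of \<eta> \<rho>] M_nonneg[of \<eta>] \<eta> \<xi> c_pos assms by (intro mult_mono) auto
  then have "M \<rho> \<le> c * \<rho>\<^sup>2 * M \<rho>"
    using \<xi> \<eta> assms mult_left_mono[of "N \<xi>" "c * \<rho> * M \<rho>" \<rho>]
    by (simp add: power2_eq_square algebra_simps)
  moreover have "c * \<rho>\<^sup>2 * M \<rho> \<le> M \<rho>"
    using M_nonneg[of \<rho>] assms mult_right_mono[of "c * \<rho>\<^sup>2" 1 "M \<rho>"] by simp
  ultimately have "(1 - c * \<rho>\<^sup>2) * M \<rho> = 0" by (simp add: algebra_simps)
  then show ?thesis using assms by simp
qed (use assms in simp)

end

section \<open>Integration in polar coordinates\<close>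

lemma has_integral_coordinate_iso:
  fixes g :: "'a::euclidean_space \<Rightarrow> 'b::euclidean_space"
  assumes hg: "\<And>x. h (g x) = x" and gh: "\<And>y. g (h y) = y" and "linear g"
    and mem: "\<And>x u v. g x \<in> cbox (g u) (g v) \<longleftrightarrow> x \<in> cbox u v"
    and content: "\<And>u v. Henstock_Kurzweil_Integration.content (cbox (g u) (g v))
                    = Henstock_Kurzweil_Integration.content (cbox u v)"
    and "(f has_integral I) (cbox a b)"
  shows "((\<lambda>x. f (g x)) has_integral I) (cbox (h a) (h b))"
proof -
  have g_cbox: "g ` cbox u v = cbox (g u) (g v)" for u v
    using mem by (auto simp: image_iff) (metis gh mem)
  have h_cbox: "h ` cbox u v = cbox (h u) (h v)" for u v
    using mem[of "h _" "h u" "h v"] by (auto simp: image_iff gh) (metis hg)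
  have "((\<lambda>x. f (g x)) has_integral (1 / 1) *\<^sub>R I) (h ` cbox a b)"
  proof (rule has_integral_twiddle[OF _ hg gh _ _ _ _ assms(6)])
    show "isCont g x" for x
      using \<open>linear g\<close> by (simp add: linear_continuous_at linear_conv_bounded_linear)
  qed (use g_cbox h_cbox content in auto)
  then show ?thesis by (simp add: h_cbox)
qed

lemma content_cbox_real2:
  "Henstock_Kurzweil_Integration.content (cbox a b :: (real^2) set)
     = Henstock_Kurzweil_Integration.content {a$1..b$1} * Henstock_Kurzweil_Integration.content {a$2..b$2}"
proof (cases "a$1 \<le> b$1 \<and> a$2 \<le> b$2")
  case True
  then have "cbox a b \<noteq> {}" by (auto simp: mem_box_cart forall_2 intro!: exI[of _ a])
  then show ?thesis using True by (simp add: content_cbox_cart UNIV_2)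
next
  case False
  then have "cbox a b = {}" by (auto simp: mem_box_cart forall_2)
  then show ?thesis using False by (auto simp: content_real_if)
qed

lemma has_integral_vector_of_pair:
  fixes H :: "real \<times> real \<Rightarrow> real"
  assumes "(H has_integral I) (cbox (a1, a2) (b1, b2))"
  shows "((\<lambda>v::real^2. H (v$1, v$2)) has_integral I) (cbox (vector [a1, a2]) (vector [b1, b2]))"
proof -
  have "((\<lambda>v::real^2. H (v$1, v$2)) has_integral I)
          (cbox ((\<lambda>p. vector [fst p, snd p]) (a1, a2)) ((\<lambda>p. vector [fst p, snd p]) (b1, b2)))"
  proof (rule has_integral_coordinate_iso[where g="\<lambda>v::real^2. (v$1, v$2)" and h="\<lambda>p. vector [fst p, snd p] :: real^2", OF _ _ _ _ _ assms])
    show "linear (\<lambda>v::real^2. (v$1, v$2))" by (auto intro!: linearI)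
    show "Henstock_Kurzweil_Integration.content (cbox (u$1, u$2) (v$1, v$2))
        = Henstock_Kurzweil_Integration.content (cbox u v)" for u v :: "real^2"
      unfolding content_Pair content_cbox_real2 by (simp add: cbox_interval)
  qed (auto simp: vec_eq_iff forall_2 mem_box_cart)
  then show ?thesis by simp
qed

lemma has_integral_complex_of_vector_cbox:
  fixes F :: "real^2 \<Rightarrow> real"
  assumes "(F has_integral I) (cbox a b)"
  shows "((\<lambda>z. F (vector [Re z, Im z])) has_integral I) (cbox (Complex (a$1) (a$2)) (Complex (b$1) (b$2)))"
proof (rule has_integral_coordinate_iso[where h="\<lambda>v. Complex (v$1) (v$2)", OF _ _ _ _ _ assms])
  show "linear (\<lambda>z. vector [Re z, Im z] :: real^2)"
    by (auto intro!: linearI simp: vec_eq_iff forall_2)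
  show "Henstock_Kurzweil_Integration.content (cbox (vector [Re u, Im u]) (vector [Re v, Im v]) :: (real^2) set)
      = Henstock_Kurzweil_Integration.content (cbox u v)" for u v
    by (simp add: content_cbox_real2 content_cbox_if Basis_complex_def box_eq_empty content_real_if)
qed (auto simp: vec_eq_iff forall_2 mem_box_cart in_cbox_complex_iff complex_eq_iff)

lemma has_integral_complex_of_vector:
  fixes F :: "real^2 \<Rightarrow> real"
  assumes "(F has_integral I) S" and "S \<subseteq> cbox a b"
  shows "((\<lambda>z. F (vector [Re z, Im z])) has_integral I) {z. vector [Re z, Im z] \<in> S}"
proof -
  have "((\<lambda>v. if v \<in> S then F v else 0) has_integral I) (cbox a b)"
    using has_integral_restrict[OF assms(2)] assms(1) by (rule iffD2)
  from has_integral_complex_of_vector_cbox[OF this]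
  have int: "((\<lambda>z. if vector [Re z, Im z] \<in> S then F (vector [Re z, Im z]) else 0) has_integral I)
          (cbox (Complex (a$1) (a$2)) (Complex (b$1) (b$2)))" .
  have "{z. vector [Re z, Im z] \<in> S} \<subseteq> cbox (Complex (a$1) (a$2)) (Complex (b$1) (b$2))"
    using assms(2) by (auto simp: in_cbox_complex_iff mem_box_cart forall_2)
  from has_integral_restrict[OF this, of "\<lambda>z. F (vector [Re z, Im z])" I] int show ?thesis
    by simp
qed

(* Polar coordinates about x as a map of real^2, where the change of variables theorem lives. *)
definition polar_vec :: "complex \<Rightarrow> real^2 \<Rightarrow> real^2" where
  "polar_vec x v = vector [Re (x + rcis (v$1) (v$2)), Im (x + rcis (v$1) (v$2))]"

definition polar_vec_deriv :: "real^2 \<Rightarrow> real^2 \<Rightarrow> real^2" where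
  "polar_vec_deriv v h =
     vector [h$1 * cos (v$2) - v$1 * sin (v$2) * h$2, h$1 * sin (v$2) + v$1 * cos (v$2) * h$2]"

lemma has_derivative_vec_nth [derivative_intros]: "((\<lambda>x. x $ i) has_derivative (\<lambda>h. h $ i)) F"
  by (rule bounded_linear_imp_has_derivative) (rule bounded_linear_vec_nth)

lemma has_derivative_polar_vec: "(polar_vec x has_derivative polar_vec_deriv v) (at v within S)"
proof (rule iffD2[OF has_derivative_componentwise_within], intro ballI)
  fix i :: "real^2" assume "i \<in> Basis"
  then obtain j where "i = axis j 1"
    unfolding Basis_vec_def Basis_real_def by auto
  then consider "i = axis 1 1" | "i = axis 2 1"
    using exhaust_2[of j] by auto
  then show "((\<lambda>w. polar_vec x w \<bullet> i) has_derivative (\<lambda>h. polar_vec_deriv v h \<bullet> i)) (at v within S)"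
    by cases (auto simp: polar_vec_def polar_vec_deriv_def inner_axis algebra_simps
                   intro!: derivative_eq_intros)
qed

lemma det_polar_vec_deriv: "det (matrix (polar_vec_deriv v)) = v$1"
proof -
  have "v$1 * (cos (v$2))\<^sup>2 + v$1 * (sin (v$2))\<^sup>2 = v$1"
    by (simp flip: distrib_left)
  then show ?thesis
    by (simp add: det_2 matrix_def polar_vec_deriv_def axis_def power2_eq_square algebra_simps)
qed

lemma inj_on_polar_vec: "inj_on (polar_vec x) (box (vector [0, 0]) (vector [r, 2*pi]))"
proof (rule inj_onI)
  fix v w :: "real^2"
  assume "v \<in> box (vector [0, 0]) (vector [r, 2*pi])" "w \<in> box (vector [0, 0]) (vector [r, 2*pi])"
  then have v: "0 < v$1" "0 < v$2" "v$2 < 2*pi" and w: "0 < w$1" "0 < w$2" "w$2 < 2*pi"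
    by (auto simp: mem_box_cart forall_2)
  assume "polar_vec x v = polar_vec x w"
  then have eq: "rcis (v$1) (v$2) = rcis (w$1) (w$2)"
    by (simp add: polar_vec_def vec_eq_iff forall_2 complex_eq_iff)
  have "Arg2pi (rcis (v$1) (v$2)) = v$2" "Arg2pi (rcis (w$1) (w$2)) = w$2"
    using v w by (auto intro!: Arg2pi_unique simp: rcis_def cis_conv_exp)
  moreover have "norm (rcis (v$1) (v$2)) = v$1" "norm (rcis (w$1) (w$2)) = w$1"
    using v w by simp_all
  ultimately show "v = w"
    using eq by (simp add: vec_eq_iff forall_2)
qed

lemma has_integral_polar_vec:
  fixes F :: "real^2 \<Rightarrow> real"
  assumes cont: "continuous_on (cbox (vector [0, 0]) (vector [r, 2*pi])) (\<lambda>v. v$1 * F (polar_vec x v))"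
    and int: "((\<lambda>v. v$1 * F (polar_vec x v)) has_integral I) (cbox (vector [0, 0]) (vector [r, 2*pi]))"
  shows "(F has_integral I) (polar_vec x ` box (vector [0, 0]) (vector [r, 2*pi]))"
proof -
  define B :: "(real^2) set" where "B = box (vector [0, 0]) (vector [r, 2*pi])"
  have "(\<lambda>v. v$1 * F (polar_vec x v)) absolutely_integrable_on cbox (vector [0, 0]) (vector [r, 2*pi])"
    by (rule absolutely_integrable_continuous[OF cont])
  then have abs_B: "(\<lambda>v. v$1 * F (polar_vec x v)) absolutely_integrable_on B"
    unfolding B_def by (rule set_integrable_subset) (auto simp: box_subset_cbox)
  have int_B: "integral B (\<lambda>v. v$1 * F (polar_vec x v)) = I"
    unfolding B_def integral_open_interval using int by (rule integral_unique)
  have jacobian: "\<bar>det (matrix (polar_vec_deriv v))\<bar> *\<^sub>R vec (F (polar_vec x v)) = (vec (v$1 * F (polar_vec x v)) :: real^1)"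
    if "v \<in> B" for v
    using that by (simp add: det_polar_vec_deriv B_def mem_box_cart forall_2 vec_eq_iff)
  have "(\<lambda>v. \<bar>det (matrix (polar_vec_deriv v))\<bar> *\<^sub>R (vec (F (polar_vec x v)) :: real^1)) absolutely_integrable_on B
        \<and> integral B (\<lambda>v. \<bar>det (matrix (polar_vec_deriv v))\<bar> *\<^sub>R (vec (F (polar_vec x v)) :: real^1)) = vec I"
  proof
    show "(\<lambda>v. \<bar>det (matrix (polar_vec_deriv v))\<bar> *\<^sub>R (vec (F (polar_vec x v)) :: real^1)) absolutely_integrable_on B"
    proof (rule absolutely_integrable_spike[OF _ negligible_empty])
      show "(\<lambda>v. vec (v$1 * F (polar_vec x v)) :: real^1) absolutely_integrable_on B"
        using abs_B by (simp add: absolutely_integrable_on_1_iff)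
    qed (simp add: jacobian)
    show "integral B (\<lambda>v. \<bar>det (matrix (polar_vec_deriv v))\<bar> *\<^sub>R (vec (F (polar_vec x v)) :: real^1)) = vec I"
      using int_B by (simp add: jacobian integral_on_1_eq cong: integral_cong)
  qed
  moreover have "B \<in> sets lebesgue" by (simp add: B_def)
  moreover have "(polar_vec x has_derivative polar_vec_deriv v) (at v within B)" for v
    by (rule has_derivative_polar_vec)
  ultimately have "(\<lambda>w. vec (F w) :: real^1) absolutely_integrable_on polar_vec x ` B
             \<and> integral (polar_vec x ` B) (\<lambda>w. vec (F w) :: real^1) = vec I"
    using has_absolute_integral_change_of_variables[of B "polar_vec x" polar_vec_deriv]
      inj_on_polar_vec[of x r, folded B_def] by blast
  then show ?thesis
    unfolding B_def
    by (auto simp: absolutely_integrable_on_1_iff integral_on_1_eq vec_eq_iff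
             intro!: integrable_integral dest: set_lebesgue_integral_eq_integral(1))
qed

lemma rcis_cmod_Arg2pi: "rcis (cmod z) (Arg2pi z) = z"
  using Arg2pi_eq[of z] by (simp add: rcis_def cis_conv_exp)

lemma polar_vec_image_subset_cbox:
  "polar_vec x ` box (vector [0, 0]) (vector [r, 2*pi])
     \<subseteq> cbox (vector [Re x - r, Im x - r]) (vector [Re x + r, Im x + r])"
proof clarify
  fix v :: "real^2" assume "v \<in> box (vector [0, 0]) (vector [r, 2*pi])"
  then have "0 < v$1" "v$1 < r" by (auto simp: mem_box_cart forall_2)
  then have "v$1 * \<bar>cos (v$2)\<bar> \<le> r" "v$1 * \<bar>sin (v$2)\<bar> \<le> r"
    by (auto intro: order_trans[OF mult_left_le] less_imp_le)
  then have "\<bar>v$1 * cos (v$2)\<bar> \<le> r" "\<bar>v$1 * sin (v$2)\<bar> \<le> r"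
    using \<open>0 < v$1\<close> by (simp_all add: abs_mult)
  then show "polar_vec x v \<in> cbox (vector [Re x - r, Im x - r]) (vector [Re x + r, Im x + r])"
    unfolding abs_le_iff by (simp add: polar_vec_def mem_box_cart forall_2)
qed

lemma Re_Im_in_polar_vec_image:
  "{z. vector [Re z, Im z] \<in> polar_vec x ` S} = (\<lambda>v. x + rcis (v$1) (v$2)) ` S"
proof -
  have "vector [Re z, Im z] = polar_vec x v \<longleftrightarrow> z = x + rcis (v$1) (v$2)" for z v
    by (auto simp: polar_vec_def vec_eq_iff forall_2 complex_eq_iff)
  then show ?thesis by blast
qed

lemma has_integral_polar_image:
  fixes f :: "complex \<Rightarrow> real"
  assumes cont: "continuous_on (cbox (0, 0) (r, 2*pi)) (\<lambda>(\<rho>, \<theta>). \<rho> * f (x + rcis \<rho> \<theta>))"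
  shows "(f has_integral integral (cbox (0, 0) (r, 2*pi)) (\<lambda>(\<rho>, \<theta>). \<rho> * f (x + rcis \<rho> \<theta>)))
           ((\<lambda>v::real^2. x + rcis (v$1) (v$2)) ` box (vector [0, 0]) (vector [r, 2*pi]))"
proof -
  define H where "H = (\<lambda>(\<rho>, \<theta>). \<rho> * f (x + rcis \<rho> \<theta>))"
  define F :: "real^2 \<Rightarrow> real" where "F w = f (Complex (w$1) (w$2))" for w
  have H_vec: "H (v$1, v$2) = v$1 * F (polar_vec x v)" for v
  proof -
    have "Complex (Re x + v$1 * cos (v$2)) (Im x + v$1 * sin (v$2)) = x + rcis (v$1) (v$2)"
      by (simp add: complex_eq_iff)
    then show ?thesis by (simp add: H_def F_def polar_vec_def)
  qed
  have "(H has_integral integral (cbox (0, 0) (r, 2*pi)) H) (cbox (0, 0) (r, 2*pi))"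
    using integrable_continuous[OF cont[folded H_def]] by (rule integrable_integral)
  from has_integral_vector_of_pair[OF this]
  have "((\<lambda>v. v$1 * F (polar_vec x v)) has_integral integral (cbox (0, 0) (r, 2*pi)) H)
          (cbox (vector [0, 0]) (vector [r, 2*pi]))"
    by (simp add: H_vec)
  moreover have "continuous_on (cbox (vector [0, 0]) (vector [r, 2*pi])) (\<lambda>v::real^2. H (v$1, v$2))"
    by (rule continuous_on_compose2[OF cont[folded H_def]])
      (auto intro!: continuous_intros simp: mem_box_cart forall_2)
  ultimately have "(F has_integral integral (cbox (0, 0) (r, 2*pi)) H) (polar_vec x ` box (vector [0, 0]) (vector [r, 2*pi]))"
    unfolding H_vec by (rule has_integral_polar_vec[rotated])
  from has_integral_complex_of_vector[OF this polar_vec_image_subset_cbox]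
  show ?thesis
    by (simp add: F_def H_def Re_Im_in_polar_vec_image)
qed

lemma ball_minus_polar_image:
  "ball x r - (\<lambda>v::real^2. x + rcis (v$1) (v$2)) ` box (vector [0, 0]) (vector [r, 2*pi]) \<subseteq> {z. z \<bullet> \<i> = Im x}"
proof clarify
  fix z assume z: "z \<in> ball x r" "z \<notin> (\<lambda>v::real^2. x + rcis (v$1) (v$2)) ` box (vector [0, 0]) (vector [r, 2*pi])"
  show "z \<bullet> \<i> = Im x"
  proof (rule ccontr)
    assume "z \<bullet> \<i> \<noteq> Im x"
    then have "z - x \<notin> \<real>" by (auto simp: complex_is_Real_iff)
    then have "(vector [cmod (z - x), Arg2pi (z - x)] :: real^2) \<in> box (vector [0, 0]) (vector [r, 2*pi])"
      using z(1) Arg2pi_lt_2pi[of "z - x"] Arg2pi_ge_0[of "z - x"] Arg2pi_eq_0[of "z - x"]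
      by (auto simp: mem_box_cart forall_2 dist_norm norm_minus_commute)
    moreover have "z = x + rcis (cmod (z - x)) (Arg2pi (z - x))"
      by (simp add: rcis_cmod_Arg2pi)
    ultimately show False using z(2) by force
  qed
qed

(* The polar image misses only part of a horizontal line through x, a null set. *)
lemma has_integral_polar:
  fixes f :: "complex \<Rightarrow> real"
  assumes "continuous_on (cbox (0, 0) (r, 2*pi)) (\<lambda>(\<rho>, \<theta>). \<rho> * f (x + rcis \<rho> \<theta>))"
  shows "(f has_integral integral (cbox (0, 0) (r, 2*pi)) (\<lambda>(\<rho>, \<theta>). \<rho> * f (x + rcis \<rho> \<theta>))) (ball x r)"
proof (rule has_integral_spike_set_eq[THEN iffD1, OF _ _ has_integral_polar_image[OF assms]])
  have "{z \<in> (\<lambda>v::real^2. x + rcis (v$1) (v$2)) ` box (vector [0, 0]) (vector [r, 2*pi]) - ball x r. f z \<noteq> 0} = {}"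
    by (auto simp: mem_box_cart forall_2 dist_norm)
  then show "negligible {z \<in> (\<lambda>v::real^2. x + rcis (v$1) (v$2)) ` box (vector [0, 0]) (vector [r, 2*pi]) - ball x r. f z \<noteq> 0}"
    by (simp only: negligible_empty)
  show "negligible {z \<in> ball x r - (\<lambda>v::real^2. x + rcis (v$1) (v$2)) ` box (vector [0, 0]) (vector [r, 2*pi]). f z \<noteq> 0}"
  proof (rule negligible_subset)
    show "negligible {z :: complex. z \<bullet> \<i> = Im x}"
      by (rule negligible_standard_hyperplane) (simp add: Basis_complex_def)
  qed (use ball_minus_polar_image in blast)
qed

lemma integral_ball_radial:
  fixes f :: "complex \<Rightarrow> real" and g :: "real \<Rightarrow> real"
  assumes f: "continuous_on (cball x r) f" and g: "continuous_on {0..r} (\<lambda>\<rho>. \<rho> * g \<rho>)"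
  shows "integral (ball x r) (\<lambda>y. g (dist x y) * f y) = integral {0..r} (\<lambda>\<rho>. \<rho> * g \<rho> * circle_integral f x \<rho>)"
proof -
  define H where "H = (\<lambda>(\<rho>, \<theta>). \<rho> * (g (dist x (x + rcis \<rho> \<theta>)) * f (x + rcis \<rho> \<theta>)))"
  have H_eq: "fst p * g (fst p) * f (x + rcis (fst p) (snd p)) = H p" if "p \<in> cbox (0, 0) (r, 2*pi)" for p
    using that by (cases p) (simp add: H_def dist_norm cbox_Pair_iff)
  have "continuous_on (cbox (0, 0) (r, 2*pi)) (\<lambda>p. fst p * g (fst p))"
    by (rule continuous_on_compose2[OF g continuous_on_fst[OF continuous_on_id]])
      (auto simp: cbox_Pair_eq)
  moreover have "continuous_on (cbox (0, 0) (r, 2*pi)) (\<lambda>p. f (x + rcis (fst p) (snd p)))"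
    by (rule continuous_on_compose_polar[OF f]) (simp add: dist_norm cbox_Pair_iff)
  ultimately have "continuous_on (cbox (0, 0) (r, 2*pi)) (\<lambda>p. fst p * g (fst p) * f (x + rcis (fst p) (snd p)))"
    by (rule continuous_on_mult)
  then have cont: "continuous_on (cbox (0, 0) (r, 2*pi)) H"
    by (rule continuous_on_eq) (rule H_eq)
  have "integral (ball x r) (\<lambda>y. g (dist x y) * f y) = integral (cbox (0, 0) (r, 2*pi)) H"
    using has_integral_polar[where f="\<lambda>y. g (dist x y) * f y", OF cont[unfolded H_def]]
    unfolding H_def by (rule integral_unique)
  also have "\<dots> = integral (cbox 0 r) (\<lambda>\<rho>. integral (cbox 0 (2*pi)) (\<lambda>\<theta>. H (\<rho>, \<theta>)))"
    by (rule integral_prod_continuous[OF cont])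
  also have "\<dots> = integral {0..r} (\<lambda>\<rho>. \<rho> * g \<rho> * circle_integral f x \<rho>)"
    unfolding circle_integral_def cbox_interval
  proof (rule integral_cong)
    fix \<rho> assume "\<rho> \<in> {0..r}"
    then have "integral {0..2*pi} (\<lambda>\<theta>. H (\<rho>, \<theta>)) = integral {0..2*pi} (\<lambda>\<theta>. \<rho> * g \<rho> * f (x + rcis \<rho> \<theta>))"
      using H_eq[of "(\<rho>, _)"] by (intro integral_cong) (simp add: cbox_Pair_iff)
    then show "integral {0..2*pi} (\<lambda>\<theta>. H (\<rho>, \<theta>)) = \<rho> * g \<rho> * integral {0..2*pi} (\<lambda>\<theta>. f (x + rcis \<rho> \<theta>))"
      by (simp add: integral_mult_right)
  qed
  finally show ?thesis .
qed

lemma tendsto_log_weight: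
  fixes r :: real
  assumes "r > 0"
  shows "((\<lambda>\<rho>. \<rho> * ln (r / \<rho>)) \<longlongrightarrow> 0) (at_right 0)"
proof -
  have "filterlim (\<lambda>\<rho>::real. r * inverse \<rho>) at_top (at_right 0)"
    by (rule filterlim_tendsto_pos_mult_at_top[OF tendsto_const assms filterlim_inverse_at_top_right])
  then have "((\<lambda>\<rho>. r * (ln (r / \<rho>) / (r / \<rho>))) \<longlongrightarrow> r * 0) (at_right 0)"
    by (intro tendsto_mult tendsto_const filterlim_compose[OF ln_x_over_x_tendsto_0])
      (simp add: divide_inverse)
  moreover have "\<forall>\<^sub>F \<rho> in at_right 0. r * (ln (r / \<rho>) / (r / \<rho>)) = \<rho> * ln (r / \<rho>)"
    using eventually_at_right_less[of 0] by eventually_elim (use assms in simp)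
  ultimately show ?thesis by (simp add: tendsto_cong)
qed

lemma continuous_on_log_weight:
  fixes r :: real
  assumes "r > 0"
  shows "continuous_on {0..r} (\<lambda>\<rho>. \<rho> * ln (r / \<rho>))"
  unfolding continuous_on_eq_continuous_within
proof
  fix \<rho> assume \<rho>: "\<rho> \<in> {0..r}"
  show "continuous (at \<rho> within {0..r}) (\<lambda>\<rho>. \<rho> * ln (r / \<rho>))"
  proof (cases "\<rho> = 0")
    case True
    then show ?thesis
      using tendsto_log_weight[OF assms] by (simp add: continuous_within at_within_Icc_at_right[OF assms])
  next
    case False
    with \<rho> assms have "isCont (\<lambda>\<rho>. \<rho> * ln (r / \<rho>)) \<rho>" by (auto intro!: continuous_intros)
    then show ?thesis by (rule continuous_at_imp_continuous_at_within)
  qed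
qed

lemma has_integral_log_weight:
  fixes r :: real
  assumes "r > 0"
  shows "((\<lambda>\<rho>. \<rho> * ln (r / \<rho>)) has_integral r\<^sup>2 / 4) {0..r}"
proof -
  define w where "w \<rho> = \<rho> * ln (r / \<rho>)" for \<rho>
  define G where "G \<rho> = \<rho> / 2 * w \<rho> + \<rho>\<^sup>2 / 4" for \<rho>
  have "((\<lambda>\<rho>. \<rho> * ln (r / \<rho>)) has_integral G r - G 0) {0..r}"
  proof (rule fundamental_theorem_of_calculus_interior)
    show "continuous_on {0..r} G"
      unfolding G_def using continuous_on_log_weight[OF assms, folded w_def]
      by (intro continuous_intros) auto
    show "(G has_vector_derivative \<rho> * ln (r / \<rho>)) (at \<rho>)" if "\<rho> \<in> {0<..<r}" for \<rho>
      using that assms unfolding G_def w_def has_real_derivative_iff_has_vector_derivative[symmetric]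
      by (auto intro!: derivative_eq_intros simp: field_simps power2_eq_square)
  qed (use assms in simp)
  then show ?thesis using assms by (simp add: G_def w_def)
qed

lemma integral_log_weight_gt:
  fixes M :: "real \<Rightarrow> real"
  assumes "r > 0" and "continuous_on {0..r} M" and "\<And>\<rho>. 0 < \<rho> \<Longrightarrow> \<rho> < r \<Longrightarrow> M 0 < M \<rho>"
  shows "M 0 * r\<^sup>2 / 4 < integral {0..r} (\<lambda>\<rho>. \<rho> * ln (r / \<rho>) * M \<rho>)"
proof -
  have "M 0 * r\<^sup>2 / 4 = r\<^sup>2 / 4 * M 0" by simp
  also have "\<dots> = integral {0..r} (\<lambda>\<rho>. \<rho> * ln (r / \<rho>) * M 0)"
    by (rule integral_unique[symmetric], rule has_integral_mult_left, rule has_integral_log_weight[OF assms(1)])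
  also have "\<dots> < integral {0..r} (\<lambda>\<rho>. \<rho> * ln (r / \<rho>) * M \<rho>)"
    unfolding cbox_interval[symmetric]
  proof (rule integral_less)
    show "continuous_on (cbox 0 r) (\<lambda>\<rho>. \<rho> * ln (r / \<rho>) * M 0)"
      "continuous_on (cbox 0 r) (\<lambda>\<rho>. \<rho> * ln (r / \<rho>) * M \<rho>)"
      using continuous_on_log_weight[OF assms(1)] assms(2)
      by (auto simp: cbox_interval intro: continuous_on_mult continuous_on_const)
    show "box 0 r \<noteq> {}" using assms(1) by simp
    show "\<rho> * ln (r / \<rho>) * M 0 < \<rho> * ln (r / \<rho>) * M \<rho>" if "\<rho> \<in> box 0 r" for \<rho>
      using that assms(3)[of \<rho>] by (simp add: box_real)
  qed
  finally show ?thesis .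
qed

section \<open>Nonnegative panharmonic functions\<close>

lemma panharmonic_circle_integral_ode:
  assumes D: "open D" and u: "panharmonic \<mu> D u" and "\<mu> \<noteq> 0"
    and nonneg: "\<And>y. y \<in> D \<Longrightarrow> 0 \<le> u y" and ball: "ball z R \<subseteq> D"
  shows "\<exists>N N'. modified_bessel_ode (circle_integral u z) N N' R (\<mu>\<^sup>2)"
proof (intro exI conjI)
  have C2: "C2_on D u" and lap: "\<And>p. p \<in> D \<Longrightarrow> laplacian u p = \<mu>\<^sup>2 * u p"
    using u by (simp_all add: panharmonic_def)
  show "modified_bessel_ode (circle_integral u z)
          (\<lambda>\<rho>. integral {0..2*pi} (\<lambda>\<theta>. dir_deriv u (cis \<theta>) (z + rcis \<rho> \<theta>)))
          (\<lambda>\<rho>. integral {0..2*pi} (\<lambda>\<theta>. dir_deriv2 u (cis \<theta>) (cis \<theta>) (z + rcis \<rho> \<theta>))) R (\<mu>\<^sup>2)"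
  proof
    show "0 < \<mu>\<^sup>2" using \<open>\<mu> \<noteq> 0\<close> by simp
    fix \<rho> :: real
    show "\<rho> \<in> {-R<..<R} \<Longrightarrow> (circle_integral u z has_real_derivative
            integral {0..2*pi} (\<lambda>\<theta>. dir_deriv u (cis \<theta>) (z + rcis \<rho> \<theta>))) (at \<rho>)"
      by (rule circle_integral_DERIV[OF D C2 ball])
    show "\<rho> \<in> {-R<..<R} \<Longrightarrow> ((\<lambda>\<rho>. integral {0..2*pi} (\<lambda>\<theta>. dir_deriv u (cis \<theta>) (z + rcis \<rho> \<theta>)))
            has_real_derivative integral {0..2*pi} (\<lambda>\<theta>. dir_deriv2 u (cis \<theta>) (cis \<theta>) (z + rcis \<rho> \<theta>))) (at \<rho>)"
      by (rule circle_integral_DERIV2[OF D C2 ball])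
    show "\<rho> \<in> {-R<..<R} \<Longrightarrow>
            \<rho>\<^sup>2 * integral {0..2*pi} (\<lambda>\<theta>. dir_deriv2 u (cis \<theta>) (cis \<theta>) (z + rcis \<rho> \<theta>))
            + \<rho> * integral {0..2*pi} (\<lambda>\<theta>. dir_deriv u (cis \<theta>) (z + rcis \<rho> \<theta>))
            = \<mu>\<^sup>2 * \<rho>\<^sup>2 * circle_integral u z \<rho>"
      by (rule circle_integral_bessel[OF D C2 ball lap])
    assume "0 \<le> \<rho>" "\<rho> < R"
    then have "z + rcis \<rho> \<theta> \<in> D" for \<theta>
      using ball by (simp add: subset_iff dist_norm)
    then show "0 \<le> circle_integral u z \<rho>"
      unfolding circle_integral_def using C2 nonneg
      by (intro Henstock_Kurzweil_Integration.integral_nonneg integrable_continuous_real continuous_on_circle[of D])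
        (auto simp: C2_on_def)
  qed
qed

lemma panharmonic_zero_set_nhd:
  assumes D: "open D" and u: "panharmonic \<mu> D u" and "\<mu> \<noteq> 0"
    and nonneg: "\<And>y. y \<in> D \<Longrightarrow> 0 \<le> u y" and "z \<in> D" "u z = 0"
  shows "\<exists>e>0. ball z e \<subseteq> {y \<in> D. u y = 0}"
proof -
  have cont: "continuous_on D u" using u by (simp add: panharmonic_def C2_on_def)
  obtain R where "R > 0" and ball: "ball z R \<subseteq> D"
    using D \<open>z \<in> D\<close> open_contains_ball by blast
  then obtain N N' where ode: "modified_bessel_ode (circle_integral u z) N N' R (\<mu>\<^sup>2)"
    using panharmonic_circle_integral_ode[OF D u \<open>\<mu> \<noteq> 0\<close> nonneg] by blast
  define e where "e = min R (1 / \<bar>\<mu>\<bar>)"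
  have "u y = 0 \<and> y \<in> D" if "y \<in> ball z e" for y
  proof -
    define \<rho> where "\<rho> = cmod (y - z)"
    have "0 \<le> \<rho>" "\<rho> < R" "\<bar>\<mu>\<bar> * \<rho> < 1"
      using that \<open>\<mu> \<noteq> 0\<close> by (auto simp: \<rho>_def e_def dist_norm norm_minus_commute field_simps)
    then have "\<mu>\<^sup>2 * \<rho>\<^sup>2 < 1"
      by (simp add: power_mult_distrib[symmetric] abs_square_less_1 abs_mult)
    then have "circle_integral u z \<rho> = 0"
      using modified_bessel_ode.M_eq_0[OF ode] \<open>u z = 0\<close> \<open>0 \<le> \<rho>\<close> \<open>\<rho> < R\<close>
      by (simp add: circle_integral_0)
    moreover have on_circle: "z + rcis \<rho> \<theta> \<in> D" for \<theta>
      using ball \<open>\<rho> < R\<close> \<open>0 \<le> \<rho>\<close> by (simp add: subset_iff dist_norm)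
    moreover have "Arg2pi (y - z) \<in> {0..2*pi}"
      using Arg2pi_ge_0[of "y - z"] Arg2pi_lt_2pi[of "y - z"] by simp
    ultimately have "u (z + rcis \<rho> (Arg2pi (y - z))) = 0"
      using circle_integral_eq_0_iff[OF cont on_circle nonneg[OF on_circle]] by blast
    with on_circle[of "Arg2pi (y - z)"] show ?thesis
      by (simp add: \<rho>_def rcis_cmod_Arg2pi)
  qed
  then show ?thesis
    using \<open>R > 0\<close> \<open>\<mu> \<noteq> 0\<close> by (intro exI[of _ e]) (auto simp: e_def)
qed

lemma panharmonic_pos:
  assumes D: "open D" "connected D" and "\<mu> \<noteq> 0" and u: "panharmonic \<mu> D u"
    and nonneg: "\<And>y. y \<in> D \<Longrightarrow> 0 \<le> u y" and "\<exists>y\<in>D. u y \<noteq> 0" and "x \<in> D"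
  shows "0 < u x"
proof -
  have "open {y \<in> D. u y = 0}"
    unfolding open_contains_ball using panharmonic_zero_set_nhd[OF D(1) u \<open>\<mu> \<noteq> 0\<close> nonneg] by blast
  then have "openin (top_of_set D) {y \<in> D. u y = 0}"
    using openin_open_eq[OF D(1)] by auto
  moreover have "closedin (top_of_set D) {y \<in> D. u y = 0}"
    using u by (intro continuous_closedin_preimage_constant) (simp add: panharmonic_def C2_on_def)
  ultimately have "{y \<in> D. u y = 0} = {} \<or> {y \<in> D. u y = 0} = D"
    using D(2) connected_clopen by blast
  then have "u x \<noteq> 0"
    using assms(6,7) by auto
  then show ?thesis using nonneg[OF assms(7)] by simp
qed

theorem corollary5p1:
  fixes D :: "complex set" and \<mu> :: real and u :: "complex \<Rightarrow> real"
  assumes "open D" and "connected D" and "D \<noteq> {}"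
    and "\<mu> > 0"
    and "panharmonic \<mu> D u"
    and "\<forall>y\<in>D. u y \<ge> 0"
    and "\<exists>y\<in>D. u y \<noteq> 0"
  shows "\<forall>x\<in>D. \<forall>r>0. cball x r \<subseteq> D \<longrightarrow>
           u x / 2 < (1 / (pi * r\<^sup>2)) * integral (ball x r) (\<lambda>y. u y * ln (r / dist x y))"
proof (intro ballI allI impI)
  fix x r assume "x \<in> D" "r > 0" and cball: "cball x r \<subseteq> D"
  have "\<mu> \<noteq> 0" using assms(4) by simp
  have cont: "continuous_on (cball x r) u"
    using assms(5) cball continuous_on_subset by (auto simp: panharmonic_def C2_on_def)
  obtain N N' where ode: "modified_bessel_ode (circle_integral u x) N N' r (\<mu>\<^sup>2)"
    using panharmonic_circle_integral_ode[OF assms(1,5) \<open>\<mu> \<noteq> 0\<close>] assms(6) cball ball_subset_cball by blast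
  have "0 < u x"
    using panharmonic_pos[OF assms(1,2) \<open>\<mu> \<noteq> 0\<close> assms(5)] assms(6,7) \<open>x \<in> D\<close> by blast
  then have "circle_integral u x 0 * r\<^sup>2 / 4
      < integral {0..r} (\<lambda>\<rho>. \<rho> * ln (r / \<rho>) * circle_integral u x \<rho>)"
    using modified_bessel_ode.M_strict_mono[OF ode, of 0] circle_integral_0[of u x]
    by (intro integral_log_weight_gt \<open>r > 0\<close> continuous_on_circle_integral cont) simp
  also have "\<dots> = integral (ball x r) (\<lambda>y. u y * ln (r / dist x y))"
    using integral_ball_radial[OF cont, of "\<lambda>\<rho>. ln (r / \<rho>)"] continuous_on_log_weight[OF \<open>r > 0\<close>]
    by (simp add: mult.commute)
  finally show "u x / 2 < (1 / (pi * r\<^sup>2)) * integral (ball x r) (\<lambda>y. u y * ln (r / dist x y))"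
    using \<open>r > 0\<close> by (simp add: circle_integral_0 field_simps)
qed

end
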